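(* For every fixed integer $r\ge 2$, \[ \frac{z_{\mathcal{R}^{(r)}}(\mathbb{RM}^{(r)}_{n})}{n}\longrightarrow \frac{(r-1)!}{r^{r-1}}\quad\text{in probability as } n\to\infty . \] Equivalently, the size of a largest $r$-partite sub-matching of $\mathbb{RM}^{(r)}_{n}$ is asymptotic (in probability) to $\frac{(r-1)!}{r^{r-1}}n$.
   Context: An ordered $r$-matching of size $n$ is a set of $n$ pairwise disjoint $r$-element subsets (edges) of a linearly ordered vertex set of size $rn$, with no other vertices; $\mathcal{M}^{(r)}_n$ denotes the set of all ordered $r$-matchings on $[rn]$, and $\mathbb{RM}^{(r)}_n$ denotes a matching chosen uniformly at random from $\mathcal{M}^{(r)}_n$. An ordered matching can be written as a word: each edge gets a letter, and each vertex is replaced by the letter of its edge. An $r$-pattern is an ordered $r$-matching of size 2, written as a word over $\{A,B\}$ with each letter appearing $r$ times and beginning with $A$. Two disjoint edges $e,f$ of an ordered matching form the pattern $P$ if the matching $\{e,f\}$ (with the induced order) is order-isomorphic to $P$. For a set $\mathcal{P}$ of $r$-patterns, a $\mathcal{P}$-clique is an ordered $r$-matching in which every pair of edges forms a pattern belonging to $\mathcal{P}$; $z_{\mathcal{P}}(M)$ is the largest size of a $\mathcal{P}$-clique contained in $M$ (as a sub-matching). An $r$-pattern is $r$-partite if it is of the form $S_1S_2\cdots S_r$ with each $S_i\in\{AB,BA\}$ (and $S_1=AB$); $\mathcal{R}^{(r)}$ denotes the set of all $2^{r-1}$ $r$-partite $r$-patterns. An ordered $r$-matching of size $m$ is $r$-partite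 if each edge contains exactly one vertex from each of the $r$ consecutive blocks of $m$ vertices. *)

theory Defs
  imports "HOL-Probability.Probability"
begin

text \<open>Ordered r-matchings of size n on the linearly ordered vertex set {0..<r*n}
  (order-isomorphic to [rn]). Edges are r-element vertex sets.\<close>
definition ordered_matching :: "nat \<Rightarrow> nat \<Rightarrow> nat set set \<Rightarrow> bool" where
  "ordered_matching r n M \<longleftrightarrow>
     card M = n \<and> (\<forall>e\<in>M. card e = r) \<and> pairwise disjnt M \<and> \<Union>M = {0..<r*n}"

definition matchings :: "nat \<Rightarrow> nat \<Rightarrow> nat set set set" where
  "matchings r n = {M. ordered_matching r n M}"

text \<open>Word of the 2-edge matching {e,f}: list the vertices of e \<union> f in increasing
  order and write True (letter A) for vertices of the edge containing the smallest
  vertex, False (letter B) for the other edge. Two disjoint edges form pattern P iff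
  their word is P.\<close>
definition pattern_word :: "nat set \<Rightarrow> nat set \<Rightarrow> bool list" where
  "pattern_word e f =
     (let a = (if Min (e \<union> f) \<in> e then e else f)
      in map (\<lambda>x. x \<in> a) (sorted_list_of_set (e \<union> f)))"

text \<open>r-partite r-patterns: words S_1 ... S_r with each S_i \<in> {AB, BA} and S_1 = AB.\<close>
definition rpartite_patterns :: "nat \<Rightarrow> bool list set" where
  "rpartite_patterns r = {w. length w = 2*r \<and> (\<forall>i<r. w!(2*i) \<noteq> w!(2*i+1)) \<and> w!0 = True}"

definition is_clique :: "bool list set \<Rightarrow> nat set set \<Rightarrow> bool" where
  "is_clique P C \<longleftrightarrow> (\<forall>e\<in>C. \<forall>f\<in>C. e \<noteq> f \<longrightarrow> pattern_word e f \<in> P)"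

definition z :: "bool list set \<Rightarrow> nat set set \<Rightarrow> nat" where
  "z P M = Max (card ` {C. C \<subseteq> M \<and> is_clique P C})"

end

theory Submission
  imports Defs
begin

text \<open>Lower bound: cut the vertex set into \<open>r\<close> blocks of \<open>n\<close> consecutive vertices. Two disjoint
  edges that both meet every block once form an \<open>r\<close>-partite pattern, so \<open>z\<close> is at least the number
  of such transversal edges in the matching, whose mean is \<open>n \<cdot> n\<^sup>r / C(rn, r) \<approx> (r! / r\<^sup>r) n\<close>.

  Upper bound: in an \<open>r\<close>-partite clique the \<open>i\<close>-th vertex of each edge precedes the \<open>(i+1)\<close>-st
  vertex of every other edge. After cutting the vertex set into \<open>K\<close> cells, every clique therefore
  lies in one of finitely many families of edges whose \<open>i\<close>-th vertices range over consecutive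
  intervals of cells, and by AM-GM each such family has density at most \<open>(r! / r\<^sup>r) (1 + r / K)\<^sup>r\<close>
  among all \<open>r\<close>-sets.

  In both cases the number of edges of a uniformly random matching in a fixed family \<open>F\<close> concentrates
  around \<open>|F| n / C(rn, r)\<close>: all edges, and all pairs of disjoint edges, are equally likely to
  occur in the matching, which determines the first two moments, and Chebyshev's inequality applies.\<close>

lemma sorted_list_of_set_nth_less_iff:
  assumes "finite A" "i < card A" "j < card A"
  shows "sorted_list_of_set A ! i < sorted_list_of_set A ! j \<longleftrightarrow> i < j"
  using sorted_wrt_nth_less[OF strict_sorted_list_of_set[of A]] assms
  by (metis length_sorted_list_of_set less_asym linorder_neqE_nat)

lemma nth_sorted_list_of_set_in:
  assumes "finite A" "i < card A"
  shows "sorted_list_of_set A ! i \<in> A"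
  using assms nth_mem[of i "sorted_list_of_set A"] by simp

lemma nth_in_set_take: "i < k \<Longrightarrow> i < length xs \<Longrightarrow> xs ! i \<in> set (take k xs)"
  by (metis in_set_conv_nth length_take min_less_iff_conj nth_take)

lemma nth_notin_set_take: "distinct xs \<Longrightarrow> i < length xs \<Longrightarrow> xs ! i \<notin> set (take i xs)"
  by (auto simp: in_set_conv_nth nth_eq_iff_index_eq)

lemma set_take_sorted_list_of_set_downward_closed:
  assumes "finite A" "x \<in> set (take k (sorted_list_of_set A))" "y \<in> A" "y < x"
  shows "y \<in> set (take k (sorted_list_of_set A))"
proof -
  let ?L = "sorted_list_of_set A"
  have len: "length ?L = card A" and set: "set ?L = A" using assms(1) by auto
  obtain j where j: "j < k" "j < card A" "x = ?L ! j"
    using assms(2) len by (auto simp: in_set_conv_nth)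
  have "y \<in> set ?L" using assms(1,3) by simp
  then obtain i where i: "i < card A" "y = ?L ! i" using len by (metis in_set_conv_nth)
  have "i < j" using sorted_list_of_set_nth_less_iff[OF assms(1) i(1) j(2)] i j assms(4) by simp
  then show ?thesis using i j len by (simp add: nth_in_set_take)
qed

lemma downward_closed_eq_set_take_sorted_list_of_set:
  assumes A: "finite A" and D: "D \<subseteq> A"
    and closed: "\<And>x y. x \<in> D \<Longrightarrow> y \<in> A \<Longrightarrow> y < x \<Longrightarrow> y \<in> D"
  shows "D = set (take (card D) (sorted_list_of_set A))"
proof -
  define D' where "D' = set (take (card D) (sorted_list_of_set A))"
  have "card D \<le> card A" using A D card_mono by blast
  then have card_D': "card D' = card D"
    unfolding D'_def by (simp add: distinct_card min_def)
  have D'_A: "D' \<subseteq> A" unfolding D'_def using A set_take_subset by fastforce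
  have "D \<subseteq> D' \<or> D' \<subseteq> D"
  proof (rule ccontr)
    assume "\<not> ?thesis"
    then obtain x y where xy: "x \<in> D" "x \<notin> D'" "y \<in> D'" "y \<notin> D" by blast
    then have "x \<noteq> y" by blast
    then consider "x < y" | "y < x" by (meson linorder_neqE)
    then show False
    proof cases
      case 1
      then show False using xy D set_take_sorted_list_of_set_downward_closed[OF A, of y "card D" x]
        unfolding D'_def by blast
    next
      case 2
      then show False using xy closed[of x y] D'_A by blast
    qed
  qed
  moreover have "finite D'" "finite D" using A D D'_A finite_subset by auto
  ultimately show ?thesis using card_D' unfolding D'_def[symmetric] by (metis card_subset_eq)
qed

section \<open>\<open>r\<close>-partite patterns\<close>

lemma pattern_word_rpartite_iff:
  fixes e f :: "nat set"
  assumes fin: "finite e" "finite f" and disj: "e \<inter> f = {}" and card: "card e = r" "card f = r"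
    and r: "r \<ge> 1"
  defines "L \<equiv> sorted_list_of_set (e \<union> f)"
  shows "pattern_word e f \<in> rpartite_patterns r \<longleftrightarrow> (\<forall>j<r. (L ! (2*j) \<in> e) \<noteq> (L ! (2*j+1) \<in> e))"
proof -
  define a where "a = (if Min (e \<union> f) \<in> e then e else f)"
  have w: "pattern_word e f = map (\<lambda>x. x \<in> a) L"
    unfolding pattern_word_def a_def L_def Let_def by simp
  have len: "length L = 2 * r" unfolding L_def using fin disj card by (simp add: card_Un_disjoint)
  have in_ef: "L ! p \<in> e \<union> f" if "p < 2 * r" for p
    using that len fin unfolding L_def by (metis nth_mem set_sorted_list_of_set finite_Un)
  have same: "(pattern_word e f ! p = pattern_word e f ! q) \<longleftrightarrow> ((L ! p \<in> e) \<longleftrightarrow> (L ! q \<in> e))"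
    if "p < 2 * r" "q < 2 * r" for p q
    using that w len in_ef[OF that(1)] in_ef[OF that(2)] disj unfolding a_def by auto
  have ne: "e \<union> f \<noteq> {}" using card r by auto
  have "L ! 0 = Min (e \<union> f)"
    unfolding L_def using sorted_list_of_set_nonempty[of "e \<union> f"] fin ne by simp
  then have "pattern_word e f ! 0"
    using w len r Min_in[of "e \<union> f"] fin ne unfolding a_def by auto
  moreover have "(pattern_word e f ! (2*j) \<noteq> pattern_word e f ! (2*j+1))
      \<longleftrightarrow> ((L ! (2*j) \<in> e) \<noteq> (L ! (2*j+1) \<in> e))" if "j < r" for j
    using same[of "2*j" "2*j+1"] that by auto
  ultimately show ?thesis
    using w len unfolding rpartite_patterns_def by auto
qed

lemma card_set_take_inter_alternating:
  assumes L: "distinct L" "length L = 2 * r"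
    and alt: "\<forall>j<r. (L ! (2*j) \<in> e) \<noteq> (L ! (2*j+1) \<in> e)" and "j \<le> r"
  shows "card (set (take (2*j) L) \<inter> e) = j"
  using \<open>j \<le> r\<close>
proof (induction j)
  case 0
  then show ?case by simp
next
  case (Suc j)
  let ?x = "L ! (2*j)" and ?y = "L ! (2*j+1)"
  have lt: "2*j+1 < length L" using Suc.prems L by simp
  have step: "set (take (2 * Suc j) L) = set (take (2*j) L) \<union> {?x, ?y}"
    using lt by (simp add: take_Suc_conv_app_nth)
  have "?x \<notin> set (take (2*j) L)" using nth_notin_set_take[OF L(1)] lt by simp
  moreover have "?y \<notin> set (take (2*j) L)"
    using nth_notin_set_take[OF L(1) lt] set_take_subset_set_take[of "2*j" "2*j+1" L] by auto
  moreover have "(?x \<in> e) \<noteq> (?y \<in> e)" using alt Suc.prems by simp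
  ultimately have "set (take (2 * Suc j) L) \<inter> e = insert (if ?x \<in> e then ?x else ?y) (set (take (2*j) L) \<inter> e)"
    "(if ?x \<in> e then ?x else ?y) \<notin> set (take (2*j) L) \<inter> e"
    unfolding step by auto
  then show ?case using Suc by simp
qed

text \<open>The first \<open>2(i+1)\<close> vertices of the pattern are the first \<open>i+1\<close> vertices of each edge.\<close>
lemma rpartite_pattern_nth_less:
  fixes e f :: "nat set"
  assumes fin: "finite e" "finite f" and disj: "e \<inter> f = {}" and card: "card e = r" "card f = r"
    and w: "pattern_word e f \<in> rpartite_patterns r" and i: "Suc i < r"
  shows "sorted_list_of_set e ! i < sorted_list_of_set f ! Suc i"
proof -
  define A where "A = e \<union> f"
  define L where "L = sorted_list_of_set A"
  define P where "P = set (take (2 * Suc i) L)"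
  have finA: "finite A" using fin A_def by simp
  have L: "distinct L" "length L = 2 * r" "set L = A"
    using finA fin disj card unfolding L_def A_def by (simp_all add: card_Un_disjoint)
  have alt: "\<forall>j<r. (L ! (2*j) \<in> e) \<noteq> (L ! (2*j+1) \<in> e)"
    using w pattern_word_rpartite_iff[OF fin disj card] i unfolding L_def A_def by simp
  have alt': "\<forall>j<r. (L ! (2*j) \<in> -e) \<noteq> (L ! (2*j+1) \<in> -e)" using alt by simp
  have closed: "y \<in> P" if "x \<in> P" "y \<in> A" "y < x" for x y
    using set_take_sorted_list_of_set_downward_closed[OF finA] that unfolding P_def L_def by blast
  have "P \<subseteq> A" unfolding P_def using L(3) set_take_subset by metis
  have "card (P \<inter> e) = Suc i"
    unfolding P_def using card_set_take_inter_alternating[OF L(1,2) alt, of "Suc i"] i by simp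
  then have Pe: "P \<inter> e = set (take (Suc i) (sorted_list_of_set e))"
    using downward_closed_eq_set_take_sorted_list_of_set[OF fin(1), of "P \<inter> e"] closed A_def by auto
  have "P \<inter> f = P \<inter> -e" using \<open>P \<subseteq> A\<close> disj A_def by auto
  then have "card (P \<inter> f) = Suc i"
    unfolding P_def using card_set_take_inter_alternating[OF L(1,2) alt', of "Suc i"] i by simp
  then have Pf: "P \<inter> f = set (take (Suc i) (sorted_list_of_set f))"
    using downward_closed_eq_set_take_sorted_list_of_set[OF fin(2), of "P \<inter> f"] closed A_def by auto
  have e_in: "sorted_list_of_set e ! i \<in> P \<inter> e"
    unfolding Pe using i card by (intro nth_in_set_take) auto
  have f_out: "sorted_list_of_set f ! Suc i \<notin> P"
    using Pf nth_notin_set_take[of "sorted_list_of_set f" "Suc i"] nth_sorted_list_of_set_in[OF fin(2)] i card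
    by auto
  have f_in: "sorted_list_of_set f ! Suc i \<in> f" using nth_sorted_list_of_set_in[OF fin(2)] i card by simp
  then have "sorted_list_of_set e ! i \<noteq> sorted_list_of_set f ! Suc i" using e_in disj by auto
  moreover have "\<not> sorted_list_of_set f ! Suc i < sorted_list_of_set e ! i"
  proof
    assume "sorted_list_of_set f ! Suc i < sorted_list_of_set e ! i"
    then have "sorted_list_of_set f ! Suc i \<in> P"
      using closed[of "sorted_list_of_set e ! i"] e_in f_in A_def by simp
    then show False using f_out by contradiction
  qed
  ultimately show ?thesis by simp
qed

section \<open>Edges, blocks and transversals\<close>

definition edges :: "nat \<Rightarrow> nat \<Rightarrow> nat set set" where
  "edges r n = {S. S \<subseteq> {0..<r*n} \<and> card S = r}"

definition block :: "nat \<Rightarrow> nat \<Rightarrow> nat set" where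
  "block n i = {i*n..<Suc i*n}"

definition transversals :: "nat \<Rightarrow> nat \<Rightarrow> nat set set" where
  "transversals r n = {S \<in> edges r n. \<forall>i<r. card (S \<inter> block n i) = 1}"

lemma finite_edges: "finite (edges r n)"
  unfolding edges_def by (rule finite_subset[of _ "Pow {0..<r*n}"]) auto

lemma card_edges: "card (edges r n) = (r*n) choose r"
  unfolding edges_def using n_subsets[of "{0..<r*n}" r] by simp

lemma block_div: "x \<in> block n i \<Longrightarrow> x div n = i"
  unfolding block_def by (auto intro: div_nat_eqI simp: mult.commute)

lemma mem_block_iff: "n > 0 \<Longrightarrow> x \<in> block n i \<longleftrightarrow> x div n = i"
  using block_div[of x n i] unfolding block_def
  by (metis atLeastLessThan_iff dividend_less_div_times div_times_less_eq_dividend mult.commute mult_Suc)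

lemma transversals_union_prefix:
  assumes e: "e \<in> transversals r n" and f: "f \<in> transversals r n" and disj: "e \<inter> f = {}"
    and j: "j \<le> r"
  shows "(e \<union> f) \<inter> {..<j*n} = set (take (2*j) (sorted_list_of_set (e \<union> f)))"
proof -
  have fin: "finite e" "finite f"
    and e_block: "\<And>i. i < r \<Longrightarrow> card (e \<inter> block n i) = 1"
    and f_block: "\<And>i. i < r \<Longrightarrow> card (f \<inter> block n i) = 1"
    using e f unfolding transversals_def edges_def by (auto intro: finite_subset)
  have card_block: "card ((e \<union> f) \<inter> block n i) = 2" if "i < r" for i
  proof -
    have "card ((e \<inter> block n i) \<union> (f \<inter> block n i)) = card (e \<inter> block n i) + card (f \<inter> block n i)"
      using fin disj by (intro card_Un_disjoint) auto
    moreover have "(e \<union> f) \<inter> block n i = (e \<inter> block n i) \<union> (f \<inter> block n i)" by auto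
    ultimately show ?thesis using e_block[OF that] f_block[OF that] by simp
  qed
  have "card ((e \<union> f) \<inter> {..<j*n}) = 2 * j"
    using j
  proof (induction j)
    case (Suc j)
    have "(e \<union> f) \<inter> {..<Suc j * n} = ((e \<union> f) \<inter> {..<j*n}) \<union> ((e \<union> f) \<inter> block n j)"
      "((e \<union> f) \<inter> {..<j*n}) \<inter> ((e \<union> f) \<inter> block n j) = {}"
      unfolding block_def by auto
    then show ?case using Suc card_block[of j] fin by (simp add: card_Un_disjoint)
  qed simp
  then show ?thesis
    using downward_closed_eq_set_take_sorted_list_of_set[of "e \<union> f" "(e \<union> f) \<inter> {..<j*n}"] fin by auto
qed

lemma sorted_list_of_union_transversals_in_block:
  assumes e: "e \<in> transversals r n" and f: "f \<in> transversals r n" and disj: "e \<inter> f = {}"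
    and j: "j < r"
  defines "L \<equiv> sorted_list_of_set (e \<union> f)"
  shows "L ! (2*j) \<in> (e \<union> f) \<inter> block n j" "L ! (2*j+1) \<in> (e \<union> f) \<inter> block n j"
proof -
  have fin: "finite e" "finite f" and card: "card e = r" "card f = r"
    using e f unfolding transversals_def edges_def by (auto intro: finite_subset)
  have L: "distinct L" "length L = 2 * r" "set L = e \<union> f"
    using fin disj card unfolding L_def by (simp_all add: card_Un_disjoint)
  have prefix: "(e \<union> f) \<inter> {..<j*n} = set (take (2*j) L)"
    "(e \<union> f) \<inter> {..<Suc j * n} = set (take (2 * Suc j) L)"
    using transversals_union_prefix[OF e f disj, of j] transversals_union_prefix[OF e f disj, of "Suc j"] j
    unfolding L_def by simp_all
  have in_block: "x \<in> (e \<union> f) \<inter> block n j"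
    if "x \<in> e \<union> f" "x \<in> set (take (2 * Suc j) L)" "x \<notin> set (take (2*j) L)" for x
  proof -
    have "x < Suc j * n" using that(2) prefix(2) by blast
    moreover have "\<not> x < j * n" using that(1,3) prefix(1) by blast
    ultimately show ?thesis using that(1) unfolding block_def by simp
  qed
  have lt: "2*j+1 < length L" using j L by simp
  then have "L ! (2*j) \<in> e \<union> f" "L ! (2*j+1) \<in> e \<union> f"
    using L(3) nth_mem[of "2*j" L] nth_mem[of "2*j+1" L] by auto
  moreover have "L ! (2*j) \<in> set (take (2 * Suc j) L)" "L ! (2*j+1) \<in> set (take (2 * Suc j) L)"
    using lt by (auto intro: nth_in_set_take)
  moreover have "L ! (2*j) \<notin> set (take (2*j) L)" "L ! (2*j+1) \<notin> set (take (2*j) L)"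
    using lt nth_notin_set_take[OF L(1)] set_take_subset_set_take[of "2*j" "2*j+1" L] by auto
  ultimately show "L ! (2*j) \<in> (e \<union> f) \<inter> block n j" "L ! (2*j+1) \<in> (e \<union> f) \<inter> block n j"
    using in_block by blast+
qed

lemma transversal_pattern_rpartite:
  assumes e: "e \<in> transversals r n" and f: "f \<in> transversals r n" and disj: "e \<inter> f = {}"
    and r: "r \<ge> 1"
  shows "pattern_word e f \<in> rpartite_patterns r"
proof -
  have fin: "finite e" "finite f" and card: "card e = r" "card f = r"
    and e_block: "\<And>i. i < r \<Longrightarrow> card (e \<inter> block n i) = 1"
    and f_block: "\<And>i. i < r \<Longrightarrow> card (f \<inter> block n i) = 1"
    using e f unfolding transversals_def edges_def by (auto intro: finite_subset)
  define L where "L = sorted_list_of_set (e \<union> f)"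
  have "(L ! (2*j) \<in> e) \<noteq> (L ! (2*j+1) \<in> e)" if j: "j < r" for j
  proof -
    have in_block: "L ! (2*j) \<in> (e \<union> f) \<inter> block n j" "L ! (2*j+1) \<in> (e \<union> f) \<inter> block n j"
      using sorted_list_of_union_transversals_in_block[OF e f disj j] unfolding L_def by auto
    have "distinct L" "2*j+1 < length L"
      using fin disj card j unfolding L_def by (simp_all add: card_Un_disjoint)
    then have distinct: "L ! (2*j) \<noteq> L ! (2*j+1)" using nth_eq_iff_index_eq by fastforce
    have not_both: "\<not> (L ! (2*j) \<in> S \<and> L ! (2*j+1) \<in> S)" if one: "card (S \<inter> block n j) = 1" for S
    proof
      assume both: "L ! (2*j) \<in> S \<and> L ! (2*j+1) \<in> S"
      obtain b where b: "S \<inter> block n j = {b}" using one by (rule card_1_singletonE)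
      have "L ! (2*j) \<in> S \<inter> block n j" "L ! (2*j+1) \<in> S \<inter> block n j" using both in_block by auto
      then show False using distinct unfolding b by simp
    qed
    show ?thesis using not_both[OF e_block[OF j]] not_both[OF f_block[OF j]] in_block by blast
  qed
  then show ?thesis using pattern_word_rpartite_iff[OF fin disj card r] unfolding L_def by blast
qed

lemma power_le_card_transversals: "n ^ r \<le> card (transversals r n)"
proof -
  let ?choices = "Pi\<^sub>E {..<r} (block n)"
  have in_block: "g i \<in> block n i" if "g \<in> ?choices" "i < r" for g i using that by auto
  have block_sub: "block n i \<subseteq> {0..<r*n}" if "i < r" for i
  proof -
    have "Suc i * n \<le> r * n" using that by (intro mult_le_mono1) simp
    then show ?thesis unfolding block_def by auto
  qed
  have image_block: "g ` {..<r} \<inter> block n i = {g i}" if g: "g \<in> ?choices" and i: "i < r" for g i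
  proof
    show "g ` {..<r} \<inter> block n i \<subseteq> {g i}"
    proof
      fix x assume "x \<in> g ` {..<r} \<inter> block n i"
      then obtain j where "j < r" "x = g j" "x \<in> block n i" by auto
      then have "j = i" using in_block[OF g] block_div by metis
      then show "x \<in> {g i}" using \<open>x = g j\<close> by simp
    qed
    show "{g i} \<subseteq> g ` {..<r} \<inter> block n i" using in_block[OF g i] i by auto
  qed
  have "g ` {..<r} \<in> transversals r n" if g: "g \<in> ?choices" for g
  proof -
    have "inj_on g {..<r}" by (rule inj_onI) (metis block_div in_block[OF g] lessThan_iff)
    then have "card (g ` {..<r}) = r" by (simp add: card_image)
    moreover have "g ` {..<r} \<subseteq> {0..<r*n}" using in_block[OF g] block_sub by blast
    ultimately show ?thesis using image_block[OF g] unfolding transversals_def edges_def by simp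
  qed
  moreover have "inj_on (\<lambda>g. g ` {..<r}) ?choices"
  proof (rule inj_onI)
    fix g h assume g: "g \<in> ?choices" and h: "h \<in> ?choices" and eq: "g ` {..<r} = h ` {..<r}"
    show "g = h"
    proof (rule PiE_ext[OF g h])
      fix i assume "i \<in> {..<r}"
      then show "g i = h i" using image_block[OF g] image_block[OF h] eq by (metis lessThan_iff singleton_inject)
    qed
  qed
  moreover have "finite (transversals r n)"
    using finite_edges unfolding transversals_def by simp
  ultimately have "card ?choices \<le> card (transversals r n)" by (intro card_inj_on_le) auto
  then show ?thesis by (simp add: card_PiE block_def)
qed

section \<open>Ordered matchings and their symmetries\<close>

lemma matchingsD:
  assumes "M \<in> matchings r n"
  shows "card M = n" "\<And>e. e \<in> M \<Longrightarrow> card e = r" "pairwise disjnt M" "\<Union>M = {0..<r*n}"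
    "M \<subseteq> edges r n" "finite M"
proof -
  show c: "card M = n" "\<And>e. e \<in> M \<Longrightarrow> card e = r" "pairwise disjnt M" and u: "\<Union>M = {0..<r*n}"
    using assms unfolding matchings_def ordered_matching_def by auto
  show "M \<subseteq> edges r n" using c u unfolding edges_def by auto
  then show "finite M" using finite_edges finite_subset by blast
qed

lemma matching_edges_disjoint: "M \<in> matchings r n \<Longrightarrow> e \<in> M \<Longrightarrow> f \<in> M \<Longrightarrow> e \<noteq> f \<Longrightarrow> e \<inter> f = {}"
  using matchingsD(3) by (metis disjnt_def pairwiseD)

lemma finite_matchings: "finite (matchings r n)"
proof (rule finite_subset)
  show "matchings r n \<subseteq> Pow (edges r n)" using matchingsD(5) by blast
qed (simp add: finite_edges)

lemma matchings_nonempty: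
  assumes r: "r \<ge> 1"
  shows "matchings r n \<noteq> {}"
proof -
  define M where "M = block r ` {..<n}"
  have r0: "r > 0" using r by simp
  have "inj_on (block r) {..<n}"
    by (rule inj_onI) (metis mem_block_iff[OF r0] div_mult_self1_is_m[OF r0])
  then have "card M = n" unfolding M_def by (simp add: card_image)
  moreover have "\<forall>e\<in>M. card e = r" unfolding M_def block_def by auto
  moreover have "pairwise disjnt M"
  proof (rule pairwiseI)
    fix x y assume "x \<in> M" "y \<in> M" "x \<noteq> y"
    then obtain i j where "x = block r i" "y = block r j" "i \<noteq> j" unfolding M_def by blast
    then show "disjnt x y" unfolding disjnt_def by (auto simp: mem_block_iff[OF r0])
  qed
  moreover have "\<Union>M = {0..<r*n}"
  proof
    show "\<Union>M \<subseteq> {0..<r*n}"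
    proof
      fix x assume "x \<in> \<Union>M"
      then obtain i where "i < n" "x < Suc i * r" unfolding M_def block_def by auto
      moreover have "Suc i * r \<le> n * r" using \<open>i < n\<close> by (intro mult_le_mono1) simp
      ultimately show "x \<in> {0..<r*n}" by (simp add: mult.commute)
    qed
    show "{0..<r*n} \<subseteq> \<Union>M"
    proof
      fix x assume "x \<in> {0..<r*n}"
      then have "x div r < n" by (simp add: less_mult_imp_div_less mult.commute)
      moreover have "x \<in> block r (x div r)" by (simp add: mem_block_iff[OF r0])
      ultimately show "x \<in> \<Union>M" unfolding M_def by blast
    qed
  qed
  ultimately have "M \<in> matchings r n" unfolding matchings_def ordered_matching_def by blast
  then show ?thesis by blast
qed

lemma image_matching:
  assumes M: "M \<in> matchings r n" and \<pi>: "bij_betw \<pi> {0..<r*n} {0..<r*n}"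
  shows "(`) \<pi> ` M \<in> matchings r n"
proof -
  have inj: "inj_on \<pi> {0..<r*n}" using \<pi> bij_betw_def by blast
  have sub: "e \<subseteq> {0..<r*n}" if "e \<in> M" for e using matchingsD(4)[OF M] that by blast
  have "inj_on ((`) \<pi>) M"
    using inj_on_image_Pow[OF inj] sub by (meson PowI inj_on_subset subsetI)
  then have "card ((`) \<pi> ` M) = n" using matchingsD(1)[OF M] by (simp add: card_image)
  moreover have "\<forall>e'\<in>(`) \<pi> ` M. card e' = r"
    using matchingsD(2)[OF M] sub inj by (auto simp: card_image inj_on_subset)
  moreover have "pairwise disjnt ((`) \<pi> ` M)"
  proof (rule pairwiseI)
    fix x y assume "x \<in> (`) \<pi> ` M" "y \<in> (`) \<pi> ` M" "x \<noteq> y"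
    then obtain e f where ef: "e \<in> M" "f \<in> M" "e \<noteq> f" "x = \<pi> ` e" "y = \<pi> ` f" by blast
    have "\<pi> ` e \<inter> \<pi> ` f = \<pi> ` (e \<inter> f)" using inj_on_image_Int[OF inj sub sub] ef by blast
    then show "disjnt x y" using matching_edges_disjoint[OF M ef(1-3)] ef unfolding disjnt_def by simp
  qed
  moreover have "\<Union>((`) \<pi> ` M) = {0..<r*n}"
    using matchingsD(4)[OF M] \<pi> by (simp add: image_Union[symmetric] bij_betw_imp_surj_on)
  ultimately show ?thesis unfolding matchings_def ordered_matching_def by simp
qed

lemma card_matchings_superset_le:
  assumes \<pi>: "bij_betw \<pi> {0..<r*n} {0..<r*n}"
  shows "card {M \<in> matchings r n. Q \<subseteq> M} \<le> card {M \<in> matchings r n. (`) \<pi> ` Q \<subseteq> M}"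
proof -
  have inj: "inj_on ((`) ((`) \<pi>)) (Pow (Pow {0..<r*n}))"
    using \<pi> by (intro inj_on_image_Pow) (simp add: bij_betw_def)
  have "{M \<in> matchings r n. Q \<subseteq> M} \<subseteq> Pow (Pow {0..<r*n})" using matchingsD(4) by blast
  with inj have "inj_on ((`) ((`) \<pi>)) {M \<in> matchings r n. Q \<subseteq> M}"
    by (rule inj_on_subset)
  moreover have "(`) ((`) \<pi>) ` {M \<in> matchings r n. Q \<subseteq> M} \<subseteq> {M \<in> matchings r n. (`) \<pi> ` Q \<subseteq> M}"
    using image_matching[OF _ \<pi>] by auto
  ultimately show ?thesis using finite_matchings by (intro card_inj_on_le) auto
qed

lemma exists_bij_betw_mapping_disjoint_pair:
  assumes V: "finite V" and ST: "S \<subseteq> V" "T \<subseteq> V" "S \<inter> T = {}"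
    and ST': "S' \<subseteq> V" "T' \<subseteq> V" "S' \<inter> T' = {}" and card: "card S = card S'" "card T = card T'"
  shows "\<exists>\<pi>. bij_betw \<pi> V V \<and> \<pi> ` S = S' \<and> \<pi> ` T = T'"
proof -
  define R where "R = V - (S \<union> T)"
  define R' where "R' = V - (S' \<union> T')"
  have fin: "finite S" "finite T" "finite S'" "finite T'" "finite R" "finite R'"
    using V ST ST' R_def R'_def finite_subset by auto
  have "card (S \<union> T) = card (S' \<union> T')" using fin ST ST' card by (simp add: card_Un_disjoint)
  then have "card R = card R'"
    unfolding R_def R'_def using V ST ST' by (simp add: card_Diff_subset finite_subset)
  then obtain g where g: "bij_betw g R R'" using fin finite_same_card_bij by metis
  obtain g1 where g1: "bij_betw g1 S S'" using fin card finite_same_card_bij by metis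
  obtain g2 where g2: "bij_betw g2 T T'" using fin card finite_same_card_bij by metis
  define \<pi> where "\<pi> x = (if x \<in> S then g1 x else if x \<in> T then g2 x else g x)" for x
  have b1: "bij_betw \<pi> S S'" using g1 by (rule bij_betw_cong[THEN iffD1, rotated]) (simp add: \<pi>_def)
  have b2: "bij_betw \<pi> T T'" using g2 by (rule bij_betw_cong[THEN iffD1, rotated]) (use ST in \<open>auto simp: \<pi>_def\<close>)
  have b3: "bij_betw \<pi> R R'" using g by (rule bij_betw_cong[THEN iffD1, rotated]) (simp add: \<pi>_def R_def)
  have "bij_betw \<pi> (S \<union> T \<union> R) (S' \<union> T' \<union> R')"
    using bij_betw_combine[OF bij_betw_combine[OF b1 b2] b3] ST' R'_def by blast
  moreover have "S \<union> T \<union> R = V" "S' \<union> T' \<union> R' = V" using ST ST' R_def R'_def by auto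
  ultimately show ?thesis using b1 b2 bij_betw_imp_surj_on by metis
qed

lemma card_matchings_containing_eq:
  assumes "S \<in> edges r n" "S' \<in> edges r n"
  shows "card {M \<in> matchings r n. S \<in> M} = card {M \<in> matchings r n. S' \<in> M}"
proof -
  have le: "card {M \<in> matchings r n. S \<in> M} \<le> card {M \<in> matchings r n. S' \<in> M}"
    if edges: "S \<in> edges r n" "S' \<in> edges r n" for S S'
  proof -
    obtain \<pi> where \<pi>: "bij_betw \<pi> {0..<r*n} {0..<r*n}" "\<pi> ` S = S'"
      using exists_bij_betw_mapping_disjoint_pair[of "{0..<r*n}" S "{}" S' "{}"] edges
      unfolding edges_def by auto
    show ?thesis using card_matchings_superset_le[OF \<pi>(1), of "{S}"] \<pi>(2) by simp
  qed
  show ?thesis using le[OF assms] le[OF assms(2,1)] by simp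
qed

lemma card_matchings_containing_pair_eq:
  assumes "S \<in> edges r n" "T \<in> edges r n" "S \<inter> T = {}"
    and "S' \<in> edges r n" "T' \<in> edges r n" "S' \<inter> T' = {}"
  shows "card {M \<in> matchings r n. S \<in> M \<and> T \<in> M} = card {M \<in> matchings r n. S' \<in> M \<and> T' \<in> M}"
proof -
  have le: "card {M \<in> matchings r n. S \<in> M \<and> T \<in> M} \<le> card {M \<in> matchings r n. S' \<in> M \<and> T' \<in> M}"
    if pairs: "S \<in> edges r n" "T \<in> edges r n" "S \<inter> T = {}"
      "S' \<in> edges r n" "T' \<in> edges r n" "S' \<inter> T' = {}" for S T S' T'
  proof -
    obtain \<pi> where \<pi>: "bij_betw \<pi> {0..<r*n} {0..<r*n}" "\<pi> ` S = S'" "\<pi> ` T = T'"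
      using exists_bij_betw_mapping_disjoint_pair[of "{0..<r*n}" S T S' T'] pairs
      unfolding edges_def by auto
    show ?thesis using card_matchings_superset_le[OF \<pi>(1), of "{S, T}"] \<pi>(2,3) by simp
  qed
  show ?thesis using le[OF assms] le[OF assms(4-6,1-3)] by simp
qed

section \<open>Moments of the number of edges of a random matching in a fixed family\<close>

lemma sum_card_filter_swap:
  assumes "finite A" "finite B"
  shows "(\<Sum>a\<in>A. card {b \<in> B. P a b}) = (\<Sum>b\<in>B. card {a \<in> A. P a b})"
proof -
  have "(\<Sum>a\<in>A. card {b \<in> B. P a b}) = (\<Sum>a\<in>A. \<Sum>b\<in>B. of_bool (P a b))"
    using assms(2) by (simp add: Int_def)
  also have "\<dots> = (\<Sum>b\<in>B. \<Sum>a\<in>A. of_bool (P a b))" by (rule sum.swap)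
  also have "\<dots> = (\<Sum>b\<in>B. card {a \<in> A. P a b})" using assms(1) by (simp add: Int_def)
  finally show ?thesis .
qed

lemma card_matchings_containing:
  assumes "S \<in> edges r n"
  shows "card {M \<in> matchings r n. S \<in> M} * ((r*n) choose r) = n * card (matchings r n)"
proof -
  have "card (edges r n) * card {M \<in> matchings r n. S \<in> M}
      = (\<Sum>S'\<in>edges r n. card {M \<in> matchings r n. S' \<in> M})"
    using card_matchings_containing_eq[OF _ assms] by simp
  also have "\<dots> = (\<Sum>M\<in>matchings r n. card {S' \<in> edges r n. S' \<in> M})"
    by (rule sum_card_filter_swap[OF finite_edges finite_matchings])
  also have "\<dots> = (\<Sum>M\<in>matchings r n. n)"
  proof (rule sum.cong)
    fix M assume M: "M \<in> matchings r n"
    then have "{S' \<in> edges r n. S' \<in> M} = M" using matchingsD(5) by blast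
    then show "card {S' \<in> edges r n. S' \<in> M} = n" using matchingsD(1)[OF M] by simp
  qed simp
  finally show ?thesis by (simp add: card_edges mult.commute)
qed

definition disjoint_edge_pairs :: "nat \<Rightarrow> nat \<Rightarrow> (nat set \<times> nat set) set" where
  "disjoint_edge_pairs r n = {(S, T). S \<in> edges r n \<and> T \<in> edges r n \<and> S \<inter> T = {}}"

lemma finite_disjoint_edge_pairs: "finite (disjoint_edge_pairs r n)"
  by (rule finite_subset[of _ "edges r n \<times> edges r n"])
    (auto simp: disjoint_edge_pairs_def finite_edges)

lemma card_disjoint_edge_pairs:
  "card (disjoint_edge_pairs r n) = ((r*n) choose r) * ((r*n - r) choose r)"
proof -
  have "disjoint_edge_pairs r n = Sigma (edges r n) (\<lambda>S. {T. T \<subseteq> {0..<r*n} - S \<and> card T = r})"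
    unfolding disjoint_edge_pairs_def edges_def by auto
  then have "card (disjoint_edge_pairs r n) = (\<Sum>S\<in>edges r n. card {T. T \<subseteq> {0..<r*n} - S \<and> card T = r})"
    by (simp add: finite_edges)
  also have "\<dots> = (\<Sum>S\<in>edges r n. (r*n - r) choose r)"
  proof (rule sum.cong)
    fix S assume "S \<in> edges r n"
    then have "S \<subseteq> {0..<r*n}" "card S = r" unfolding edges_def by auto
    then have "card ({0..<r*n} - S) = r*n - r"
      using card_Diff_subset[of S "{0..<r*n}"] finite_subset[of S "{0..<r*n}"] by simp
    then show "card {T. T \<subseteq> {0..<r*n} - S \<and> card T = r} = (r*n - r) choose r"
      using n_subsets[of "{0..<r*n} - S" r] by simp
  qed simp
  finally show ?thesis by (simp add: card_edges)
qed

lemma card_disjoint_edge_pairs_in_matching: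
  assumes r: "r \<ge> 1" and M: "M \<in> matchings r n"
  shows "card {p \<in> disjoint_edge_pairs r n. fst p \<in> M \<and> snd p \<in> M} = n * n - n"
proof -
  have nonempty: "S \<noteq> {}" if "S \<in> M" for S using matchingsD(2)[OF M that] r by auto
  have "{p \<in> disjoint_edge_pairs r n. fst p \<in> M \<and> snd p \<in> M} = M \<times> M - (\<lambda>S. (S, S)) ` M"
  proof (intro equalityI subsetI)
    fix p assume "p \<in> {p \<in> disjoint_edge_pairs r n. fst p \<in> M \<and> snd p \<in> M}"
    then obtain S T where "p = (S, T)" "S \<in> M" "T \<in> M" "S \<inter> T = {}"
      by (auto simp: disjoint_edge_pairs_def)
    moreover have "S \<noteq> T" using calculation nonempty by auto
    ultimately show "p \<in> M \<times> M - (\<lambda>S. (S, S)) ` M" by auto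
  next
    fix p assume "p \<in> M \<times> M - (\<lambda>S. (S, S)) ` M"
    then obtain S T where "p = (S, T)" "S \<in> M" "T \<in> M" "S \<noteq> T" by auto
    then show "p \<in> {p \<in> disjoint_edge_pairs r n. fst p \<in> M \<and> snd p \<in> M}"
      using matchingsD(5)[OF M] matching_edges_disjoint[OF M] by (auto simp: disjoint_edge_pairs_def)
  qed
  moreover have "card ((\<lambda>S. (S, S)) ` M) = card M" by (rule card_image) (auto intro: inj_onI)
  moreover have "(\<lambda>S. (S, S)) ` M \<subseteq> M \<times> M" by auto
  ultimately show ?thesis using matchingsD(1,6)[OF M] by (simp add: card_Diff_subset card_cartesian_product)
qed

lemma card_matchings_containing_pair:
  assumes r: "r \<ge> 1" and ST: "S \<in> edges r n" "T \<in> edges r n" "S \<inter> T = {}"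
  shows "card {M \<in> matchings r n. S \<in> M \<and> T \<in> M} * ((r*n) choose r) * ((r*n - r) choose r)
    = card (matchings r n) * (n * n - n)"
proof -
  have "card {M \<in> matchings r n. fst p \<in> M \<and> snd p \<in> M} = card {M \<in> matchings r n. S \<in> M \<and> T \<in> M}"
    if "p \<in> disjoint_edge_pairs r n" for p
    using that card_matchings_containing_pair_eq[OF _ _ _ ST, of "fst p" "snd p"]
    by (cases p) (simp add: disjoint_edge_pairs_def)
  then have "card (disjoint_edge_pairs r n) * card {M \<in> matchings r n. S \<in> M \<and> T \<in> M}
      = (\<Sum>p\<in>disjoint_edge_pairs r n. card {M \<in> matchings r n. fst p \<in> M \<and> snd p \<in> M})"
    by simp
  also have "\<dots> = (\<Sum>M\<in>matchings r n. card {p \<in> disjoint_edge_pairs r n. fst p \<in> M \<and> snd p \<in> M})"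
    by (rule sum_card_filter_swap[OF finite_disjoint_edge_pairs finite_matchings])
  also have "\<dots> = (\<Sum>M\<in>matchings r n. n * n - n)"
    using card_disjoint_edge_pairs_in_matching[OF r] by simp
  finally show ?thesis by (simp add: card_disjoint_edge_pairs mult.commute mult.left_commute)
qed

lemma sum_card_inter_matchings:
  assumes F: "F \<subseteq> edges r n"
  shows "(\<Sum>M\<in>matchings r n. card (M \<inter> F)) * ((r*n) choose r) = card F * n * card (matchings r n)"
proof -
  have fin: "finite F" using F finite_edges finite_subset by blast
  have "(\<Sum>M\<in>matchings r n. card (M \<inter> F)) = (\<Sum>S\<in>F. card {M \<in> matchings r n. S \<in> M})"
    using sum_card_filter_swap[OF fin finite_matchings, where P = "\<lambda>S M. S \<in> M"] by (simp add: Int_def conj_commute)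
  then show ?thesis
    using F card_matchings_containing by (simp add: sum_distrib_right subset_iff)
qed

lemma card_matchings_containing_two_le:
  assumes r: "r \<ge> 1" and ST: "S \<in> edges r n" "T \<in> edges r n"
  shows "card {M \<in> matchings r n. S \<in> M \<and> T \<in> M} * ((r*n) choose r) * ((r*n - r) choose r)
    \<le> of_bool (S = T) * (n * card (matchings r n) * ((r*n - r) choose r)) + card (matchings r n) * (n * n - n)"
proof (cases "S = T")
  case True
  then show ?thesis using card_matchings_containing[OF ST(1)] by simp
next
  case False
  show ?thesis
  proof (cases "S \<inter> T = {}")
    case True
    then show ?thesis using card_matchings_containing_pair[OF r ST True] False by simp
  next
    case intersecting: False
    have "{M \<in> matchings r n. S \<in> M \<and> T \<in> M} = {}"
      using matching_edges_disjoint False intersecting by blast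
    then show ?thesis by (simp only: card.empty)
  qed
qed

lemma sum_card_inter_matchings_squared_le:
  assumes r: "r \<ge> 1" and F: "F \<subseteq> edges r n"
  shows "(\<Sum>M\<in>matchings r n. card (M \<inter> F) ^ 2) * ((r*n) choose r) * ((r*n - r) choose r)
    \<le> card F * n * card (matchings r n) * ((r*n - r) choose r) + card F ^ 2 * card (matchings r n) * (n * n - n)"
proof -
  let ?m = "card (matchings r n)" and ?C = "(r*n) choose r" and ?C' = "(r*n - r) choose r"
  define a where "a = n * ?m * ?C'"
  define b where "b = ?m * (n * n - n)"
  have fin: "finite F" using F finite_edges finite_subset by blast
  have pair_le: "card {M \<in> matchings r n. S \<in> M \<and> T \<in> M} * ?C * ?C' \<le> of_bool (S = T) * a + b"
    if "S \<in> F" "T \<in> F" for S T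
    using card_matchings_containing_two_le[OF r] that F unfolding a_def b_def by blast
  have square: "card (M \<inter> F) ^ 2 = (\<Sum>S\<in>F. \<Sum>T\<in>F. of_bool (S \<in> M \<and> T \<in> M))" for M
  proof -
    have "card (M \<inter> F) = (\<Sum>S\<in>F. of_bool (S \<in> M))" using fin by (simp add: Int_commute)
    then show ?thesis by (simp add: power2_eq_square sum_product of_bool_conj)
  qed
  have "(\<Sum>M\<in>matchings r n. card (M \<inter> F) ^ 2)
      = (\<Sum>M\<in>matchings r n. \<Sum>S\<in>F. \<Sum>T\<in>F. of_bool (S \<in> M \<and> T \<in> M))"
    by (simp only: square)
  also have "\<dots> = (\<Sum>S\<in>F. \<Sum>T\<in>F. \<Sum>M\<in>matchings r n. of_bool (S \<in> M \<and> T \<in> M))"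
    by (subst sum.swap) (simp only: sum.swap[of _ "matchings r n"])
  also have "\<dots> = (\<Sum>S\<in>F. \<Sum>T\<in>F. card {M \<in> matchings r n. S \<in> M \<and> T \<in> M})"
    using finite_matchings by (simp add: Int_def)
  finally have "(\<Sum>M\<in>matchings r n. card (M \<inter> F) ^ 2) * ?C * ?C'
      = (\<Sum>S\<in>F. \<Sum>T\<in>F. card {M \<in> matchings r n. S \<in> M \<and> T \<in> M} * ?C * ?C')"
    by (simp add: sum_distrib_right)
  also have "\<dots> \<le> (\<Sum>S\<in>F. \<Sum>T\<in>F. of_bool (S = T) * a + b)"
    using pair_le by (intro sum_mono) auto
  also have "\<dots> = card F * a + card F ^ 2 * b"
    using fin by (simp add: sum.distrib power2_eq_square algebra_simps)
  finally show ?thesis unfolding a_def b_def by (simp add: mult_ac)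
qed

text \<open>Writing \<open>\<rho> = |F| / C(rn, r) \<in> [0, 1]\<close>, the variance of \<open>|M \<inter> F|\<close> is at most
  \<open>\<rho> n + \<rho>\<^sup>2 (n (n - 1) C(rn, r) / C(rn - r, r) - n\<^sup>2)\<close>; this bound is uniform in \<open>F\<close>.\<close>
definition var_bound :: "nat \<Rightarrow> nat \<Rightarrow> real" where
  "var_bound r n = real n +
     \<bar>real n * (real n - 1) * ((r*n) choose r) / ((r*n - r) choose r) - real n ^ 2\<bar>"

lemma edge_binomials_pos:
  assumes "r \<ge> 1" "n \<ge> 2"
  shows "(r*n) choose r > 0" "(r*n - r) choose r > 0"
proof -
  have "r * 2 \<le> r * n" using assms(2) by (rule mult_le_mono2)
  then have "r \<le> r * n" "r \<le> r * n - r" by arith+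
  then show "(r*n) choose r > 0" "(r*n - r) choose r > 0" by simp_all
qed

lemma sum_squared_deviation_eq:
  fixes X :: "'a \<Rightarrow> real" and \<mu> :: real
  assumes "(\<Sum>x\<in>A. X x) = card A * \<mu>"
  shows "(\<Sum>x\<in>A. (X x - \<mu>)\<^sup>2) = (\<Sum>x\<in>A. (X x)\<^sup>2) - card A * \<mu>\<^sup>2"
proof -
  have "(\<Sum>x\<in>A. (X x - \<mu>)\<^sup>2) = (\<Sum>x\<in>A. (X x)\<^sup>2) - 2 * \<mu> * (\<Sum>x\<in>A. X x) + card A * \<mu>\<^sup>2"
    by (simp add: power2_diff sum.distrib sum_subtractf sum_distrib_left sum_distrib_right algebra_simps)
  then show ?thesis using assms by (simp add: power2_eq_square)
qed

lemma sum_squared_deviation_le: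
  assumes r: "r \<ge> 1" and n: "n \<ge> 2" and F: "F \<subseteq> edges r n"
  shows "(\<Sum>M\<in>matchings r n. (real (card (M \<inter> F)) - real (card F) * n / ((r*n) choose r))\<^sup>2)
    \<le> card (matchings r n) * var_bound r n"
proof -
  define m where "m = real (card (matchings r n))"
  define C where "C = real ((r*n) choose r)"
  define C' where "C' = real ((r*n - r) choose r)"
  define \<rho> where "\<rho> = real (card F) / C"
  define D where "D = real n * (real n - 1) * C / C' - real n ^ 2"
  define X where "X M = real (card (M \<inter> F))" for M
  have pos: "C > 0" "C' > 0" using edge_binomials_pos[OF r n] unfolding C_def C'_def by simp_all
  have "card F \<le> card (edges r n)" using F finite_edges by (rule card_mono[rotated])
  then have "real (card F) \<le> C" unfolding C_def by (simp add: card_edges)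
  then have \<rho>: "0 \<le> \<rho>" "\<rho> \<le> 1" unfolding \<rho>_def using pos by simp_all
  have "real ((\<Sum>M\<in>matchings r n. card (M \<inter> F)) * ((r*n) choose r)) = real (card F * n * card (matchings r n))"
    using sum_card_inter_matchings[OF F] by (simp only:)
  then have "(\<Sum>M\<in>matchings r n. X M) * C = real (card F) * n * m"
    unfolding X_def m_def C_def by simp
  then have "(\<Sum>M\<in>matchings r n. X M) = m * (\<rho> * n)"
    using pos unfolding \<rho>_def by (simp add: field_simps)
  then have "(\<Sum>M\<in>matchings r n. (X M - \<rho> * n)\<^sup>2) = (\<Sum>M\<in>matchings r n. (X M)\<^sup>2) - m * (\<rho> * n)\<^sup>2"
    unfolding m_def by (rule sum_squared_deviation_eq)
  also have "\<dots> \<le> m * (\<rho> * n + \<rho>\<^sup>2 * D)"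
  proof -
    have "real (n * n - n) = real n * (real n - 1)" using n by (simp add: algebra_simps)
    moreover have "real ((\<Sum>M\<in>matchings r n. card (M \<inter> F) ^ 2) * ((r*n) choose r) * ((r*n - r) choose r))
      \<le> real (card F * n * card (matchings r n) * ((r*n - r) choose r)
        + card F ^ 2 * card (matchings r n) * (n * n - n))"
      using sum_card_inter_matchings_squared_le[OF r F] by (simp only: of_nat_le_iff)
    ultimately have "(\<Sum>M\<in>matchings r n. (X M)\<^sup>2) * (C * C')
        \<le> real (card F) * n * m * C' + real (card F) ^ 2 * m * (real n * (real n - 1))"
      unfolding X_def m_def C_def C'_def by (simp add: mult.assoc)
    also have "\<dots> = (m * (\<rho> * n + \<rho>\<^sup>2 * D) + m * (\<rho> * n)\<^sup>2) * (C * C')"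
      using pos unfolding \<rho>_def D_def by (simp add: field_simps power2_eq_square)
    finally show ?thesis using pos by simp
  qed
  also have "\<dots> \<le> m * var_bound r n"
  proof (rule mult_left_mono)
    have "\<rho> * n \<le> n" "\<rho>\<^sup>2 * D \<le> \<bar>D\<bar>"
      using \<rho> by (auto simp: mult_left_le_one_le abs_mult power_le_one intro: order_trans[OF abs_ge_self])
    then show "\<rho> * n + \<rho>\<^sup>2 * D \<le> var_bound r n"
      unfolding var_bound_def D_def C_def C'_def by simp
  qed (simp add: m_def)
  finally show ?thesis unfolding X_def \<rho>_def C_def m_def by (simp add: mult.commute)
qed

lemma card_large_values_le:
  fixes g :: "'a \<Rightarrow> real" and \<delta> :: real
  assumes "finite A" "\<delta> > 0"
  shows "card {x \<in> A. \<delta> \<le> \<bar>g x\<bar>} * \<delta>\<^sup>2 \<le> (\<Sum>x\<in>A. (g x)\<^sup>2)"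
proof -
  have "card {x \<in> A. \<delta> \<le> \<bar>g x\<bar>} * \<delta>\<^sup>2 = (\<Sum>x\<in>{x \<in> A. \<delta> \<le> \<bar>g x\<bar>}. \<delta>\<^sup>2)" by simp
  also have "\<dots> \<le> (\<Sum>x\<in>{x \<in> A. \<delta> \<le> \<bar>g x\<bar>}. (g x)\<^sup>2)"
    using assms(2) by (intro sum_mono) (metis mem_Collect_eq abs_le_square_iff abs_of_pos)
  also have "\<dots> \<le> (\<Sum>x\<in>A. (g x)\<^sup>2)" using assms(1) by (intro sum_mono2) auto
  finally show ?thesis .
qed

lemma prob_edge_count_deviation_le:
  assumes r: "r \<ge> 1" and n: "n \<ge> 2" and F: "F \<subseteq> edges r n" and \<delta>: "\<delta> > 0"
  shows "measure_pmf.prob (pmf_of_set (matchings r n))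
      {M. \<delta> \<le> \<bar>real (card (M \<inter> F)) - real (card F) * n / ((r*n) choose r)\<bar>} \<le> var_bound r n / \<delta>\<^sup>2"
proof -
  let ?dev = "\<lambda>M. real (card (M \<inter> F)) - real (card F) * n / ((r*n) choose r)"
  have m: "card (matchings r n) > 0"
    using matchings_nonempty[OF r] finite_matchings by (simp add: card_gt_0_iff)
  have "card {M \<in> matchings r n. \<delta> \<le> \<bar>?dev M\<bar>} * \<delta>\<^sup>2 \<le> card (matchings r n) * var_bound r n"
    using card_large_values_le[OF finite_matchings[of r n] \<delta>, where g = ?dev] sum_squared_deviation_le[OF r n F]
    by linarith
  then have "card {M \<in> matchings r n. \<delta> \<le> \<bar>?dev M\<bar>} / card (matchings r n)
      \<le> (card (matchings r n) * var_bound r n / \<delta>\<^sup>2) / card (matchings r n)"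
    using m \<delta> by (intro divide_right_mono) (simp_all add: le_divide_eq)
  moreover have "measure_pmf.prob (pmf_of_set (matchings r n)) {M. \<delta> \<le> \<bar>?dev M\<bar>}
      = card {M \<in> matchings r n. \<delta> \<le> \<bar>?dev M\<bar>} / card (matchings r n)"
    using matchings_nonempty[OF r] finite_matchings by (simp add: measure_pmf_of_set Int_def conj_commute)
  ultimately show ?thesis using m by simp
qed

section \<open>Asymptotics of binomial coefficients\<close>

lemma tendsto_linear_ratio:
  fixes a b c e :: real
  assumes "c \<noteq> 0"
  shows "(\<lambda>n. (a * real n + b) / (c * real n + e)) \<longlonglongrightarrow> a / c"
proof -
  have "(\<lambda>n. (a + b / real n) / (c + e / real n)) \<longlonglongrightarrow> (a + 0) / (c + 0)"
    using assms by (intro tendsto_intros) auto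
  moreover have "\<forall>\<^sub>F n in sequentially. (a + b / real n) / (c + e / real n) = (a * real n + b) / (c * real n + e)"
    using eventually_gt_at_top[of 0]
  proof eventually_elim
    case (elim n)
    then have "(a + b / real n) / (c + e / real n) = ((a * real n + b) / real n) / ((c * real n + e) / real n)"
      by (simp add: field_simps)
    also have "\<dots> = (a * real n + b) / (c * real n + e)" using elim by simp
    finally show ?case .
  qed
  ultimately show ?thesis by (simp add: Lim_transform_eventually)
qed

lemma of_nat_binomial_mult_fact: "real (N choose k) * fact k = (\<Prod>i<k. real N - real i)"
  by (simp add: binomial_gbinomial gbinomial_mult_fact' lessThan_atLeast0)

lemma prod_linear_over_binomial_tendsto:
  fixes a b :: "nat \<Rightarrow> real"
  assumes r: "r \<ge> 1"
  shows "(\<lambda>n. (\<Prod>i<r. a i * real n + b i) / ((r*n) choose r)) \<longlonglongrightarrow> fact r * (\<Prod>i<r. a i / real r)"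
proof -
  have "(\<lambda>n. fact r * (\<Prod>i<r. (a i * real n + b i) / (real r * real n + - real i)))
      \<longlonglongrightarrow> fact r * (\<Prod>i<r. a i / real r)"
    using r by (intro tendsto_intros tendsto_linear_ratio) auto
  moreover have "(\<Prod>i<r. a i * real n + b i) / ((r*n) choose r)
      = fact r * (\<Prod>i<r. (a i * real n + b i) / (real r * real n + - real i))" for n
  proof -
    have "real ((r*n) choose r) = (\<Prod>i<r. real r * real n - real i) / fact r"
      using of_nat_binomial_mult_fact[of "r*n" r] by (simp add: eq_divide_eq)
    then show ?thesis by (simp add: prod_dividef)
  qed
  ultimately show ?thesis by simp
qed

lemma binomial_ratio_tendsto_1:
  assumes r: "r \<ge> 1"
  shows "(\<lambda>n. real ((r*n) choose r) / ((r*n - r) choose r)) \<longlonglongrightarrow> 1"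
proof -
  have "(\<lambda>n. \<Prod>i<r. (real r * real n + - real i) / (real r * real n + (- real r - real i)))
      \<longlonglongrightarrow> (\<Prod>i<r. real r / real r)"
    using r by (intro tendsto_intros tendsto_linear_ratio) auto
  moreover have "\<forall>\<^sub>F n in sequentially. (\<Prod>i<r. (real r * real n + - real i) / (real r * real n + (- real r - real i)))
      = real ((r*n) choose r) / ((r*n - r) choose r)"
    using eventually_ge_at_top[of 1]
  proof eventually_elim
    case (elim n)
    then have "real (r*n - r) = real r * real n - real r" by simp
    then have "real ((r*n - r) choose r) * fact r = (\<Prod>i<r. real r * real n - real r - real i)"
      using of_nat_binomial_mult_fact[of "r*n - r" r] by simp
    moreover have "real ((r*n) choose r) * fact r = (\<Prod>i<r. real r * real n - real i)"
      using of_nat_binomial_mult_fact[of "r*n" r] by simp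
    moreover have "real ((r*n) choose r) / ((r*n - r) choose r)
        = (real ((r*n) choose r) * fact r) / (real ((r*n - r) choose r) * fact r)"
      by simp
    ultimately show ?case by (simp add: prod_dividef algebra_simps)
  qed
  ultimately show ?thesis using r by (simp add: Lim_transform_eventually)
qed

lemma var_bound_tendsto_0:
  assumes r: "r \<ge> 1"
  shows "(\<lambda>n. var_bound r n / real n ^ 2) \<longlonglongrightarrow> 0"
proof -
  let ?q = "\<lambda>n. real ((r*n) choose r) / ((r*n - r) choose r)"
  have "(\<lambda>n. 1 / real n + \<bar>(1 * real n + - 1) / (1 * real n + 0) * ?q n - 1\<bar>)
      \<longlonglongrightarrow> 0 + \<bar>(1 / 1) * 1 - 1\<bar>"
    by (intro tendsto_intros tendsto_linear_ratio binomial_ratio_tendsto_1[OF r]) auto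
  moreover have "\<forall>\<^sub>F n in sequentially.
      1 / real n + \<bar>(1 * real n + - 1) / (1 * real n + 0) * ?q n - 1\<bar> = var_bound r n / real n ^ 2"
    using eventually_gt_at_top[of 0]
  proof eventually_elim
    case (elim n)
    then have n0: "real n > 0" and n2: "real n ^ 2 > 0" by simp_all
    have "var_bound r n / real n ^ 2
        = real n / real n ^ 2 + \<bar>(real n * (real n - 1) * ?q n - real n ^ 2) / real n ^ 2\<bar>"
      unfolding var_bound_def using n2 by (simp add: add_divide_distrib)
    also have "(real n * (real n - 1) * x - real n ^ 2) / real n ^ 2 = (real n - 1) / real n * x - 1" for x
      using n0 by (simp add: field_simps power2_eq_square)
    finally show ?case using elim by (simp add: power2_eq_square)
  qed
  ultimately show ?thesis by (simp add: Lim_transform_eventually)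
qed

section \<open>Cliques and threshold families\<close>

lemma finite_cliques:
  assumes "M \<in> matchings r n"
  shows "finite {C. C \<subseteq> M \<and> is_clique P C}"
  by (rule finite_subset[of _ "Pow M"]) (use matchingsD(6)[OF assms] in auto)

lemma card_le_z:
  assumes "M \<in> matchings r n" "C \<subseteq> M" "is_clique P C"
  shows "card C \<le> z P M"
  unfolding z_def using finite_cliques[OF assms(1)] assms(2,3) by (intro Max_ge) auto

lemma z_attained:
  assumes "M \<in> matchings r n"
  obtains C where "C \<subseteq> M" "is_clique P C" "z P M = card C"
proof -
  have "{} \<in> {C. C \<subseteq> M \<and> is_clique P C}" unfolding is_clique_def by simp
  then have "z P M \<in> card ` {C. C \<subseteq> M \<and> is_clique P C}"
    unfolding z_def using finite_cliques[OF assms] by (intro Max_in) auto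
  then show ?thesis using that by blast
qed

lemma card_transversals_le_z:
  assumes M: "M \<in> matchings r n" and r: "r \<ge> 1"
  shows "card (M \<inter> transversals r n) \<le> z (rpartite_patterns r) M"
proof (rule card_le_z[OF M])
  show "is_clique (rpartite_patterns r) (M \<inter> transversals r n)"
    unfolding is_clique_def
    using transversal_pattern_rpartite[OF _ _ _ r] matching_edges_disjoint[OF M] by blast
qed blast

text \<open>The \<open>i\<close>-th vertices of the edges of an
  \<open>r\<close>-partite clique all lie in the cells \<open>u i, \<dots>, u (i+1)\<close> for a monotone sequence of thresholds \<open>u\<close>;
  for fixed \<open>K\<close> there are only finitely many such sequences.\<close>
definition cell :: "nat \<Rightarrow> nat \<Rightarrow> nat \<Rightarrow> nat" where
  "cell K N v = v * K div N"

definition thresholds :: "nat \<Rightarrow> nat \<Rightarrow> (nat \<Rightarrow> nat) set" where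
  "thresholds r K = {u \<in> {..r} \<rightarrow>\<^sub>E {..K}. u 0 = 0 \<and> u r = K \<and> (\<forall>i<r. u i \<le> u (Suc i))}"

definition threshold_family :: "nat \<Rightarrow> nat \<Rightarrow> nat \<Rightarrow> (nat \<Rightarrow> nat) \<Rightarrow> nat set set" where
  "threshold_family r n K u = {S \<in> edges r n. \<forall>i<r.
     u i \<le> cell K (r*n) (sorted_list_of_set S ! i) \<and> cell K (r*n) (sorted_list_of_set S ! i) \<le> u (Suc i)}"

lemma cell_mono: "v \<le> w \<Longrightarrow> cell K N v \<le> cell K N w"
  unfolding cell_def by (intro div_le_mono mult_le_mono1)

lemma cell_le:
  assumes "v \<le> N"
  shows "cell K N v \<le> K"
proof -
  have "cell K N v \<le> cell K N N" using assms by (rule cell_mono)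
  also have "\<dots> \<le> K" unfolding cell_def by (cases "N = 0") auto
  finally show ?thesis .
qed

lemma finite_thresholds: "finite (thresholds r K)"
  unfolding thresholds_def by (rule finite_subset[of _ "{..r} \<rightarrow>\<^sub>E {..K}"]) (auto intro: finite_PiE)

lemma threshold_family_subset_edges: "threshold_family r n K u \<subseteq> edges r n"
  unfolding threshold_family_def by blast

lemma clique_nth_less:
  assumes M: "M \<in> matchings r n" and C: "C \<subseteq> M" "is_clique (rpartite_patterns r) C"
    and e: "e \<in> C" and f: "f \<in> C" and i: "Suc i < r"
  shows "sorted_list_of_set e ! i < sorted_list_of_set f ! Suc i"
proof -
  have edge: "finite e" "card e = r" if "e \<in> C" for e
    using that C matchingsD(5)[OF M] unfolding edges_def by (auto intro: finite_subset)
  show ?thesis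
  proof (cases "e = f")
    case True
    then show ?thesis using sorted_list_of_set_nth_less_iff[of f i "Suc i"] edge[OF f] i by simp
  next
    case False
    then have "pattern_word e f \<in> rpartite_patterns r" using C(2) e f unfolding is_clique_def by blast
    moreover have "e \<inter> f = {}" using matching_edges_disjoint[OF M] C e f False by blast
    ultimately show ?thesis using rpartite_pattern_nth_less edge[OF e] edge[OF f] i by simp
  qed
qed

definition cell_thresholds :: "nat \<Rightarrow> nat \<Rightarrow> nat \<Rightarrow> (nat \<Rightarrow> nat) \<Rightarrow> nat \<Rightarrow> nat" where
  "cell_thresholds r K N a = restrict (\<lambda>i. if i = 0 then 0 else if i = r then K else cell K N (a (i - 1))) {..r}"

lemma cell_thresholds_in_thresholds:
  assumes r: "r \<ge> 1" and mono: "\<And>i. Suc (Suc i) < r \<Longrightarrow> a i \<le> a (Suc i)"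
    and bound: "\<And>i. Suc i < r \<Longrightarrow> a i \<le> N"
  shows "cell_thresholds r K N a \<in> thresholds r K"
proof -
  let ?u = "cell_thresholds r K N a"
  have le_K: "?u i \<le> K" if "i \<le> r" for i
    using that bound[of "i - 1"] unfolding cell_thresholds_def by (auto intro: cell_le)
  moreover have "?u i \<le> ?u (Suc i)" if "i < r" for i
  proof (cases "i = 0 \<or> Suc i = r")
    case True
    then show ?thesis using le_K[of i] that unfolding cell_thresholds_def by auto
  next
    case False
    then have "a (i - 1) \<le> a i" using mono[of "i - 1"] that by simp
    then show ?thesis using False that unfolding cell_thresholds_def by (simp add: cell_mono)
  qed
  ultimately show ?thesis using r unfolding thresholds_def by (auto simp: cell_thresholds_def)
qed

lemma mem_threshold_family_cell_thresholds:
  assumes S: "S \<in> edges r n"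
    and below: "\<And>i. Suc i < r \<Longrightarrow> a i < sorted_list_of_set S ! Suc i"
    and above: "\<And>i. Suc i < r \<Longrightarrow> sorted_list_of_set S ! i \<le> a i"
  shows "S \<in> threshold_family r n K (cell_thresholds r K (r*n) a)"
proof -
  let ?u = "cell_thresholds r K (r*n) a" and ?c = "\<lambda>i. cell K (r*n) (sorted_list_of_set S ! i)"
  have "?u i \<le> ?c i \<and> ?c i \<le> ?u (Suc i)" if i: "i < r" for i
  proof
    show "?u i \<le> ?c i"
      using below[of "i - 1"] i unfolding cell_thresholds_def by (cases "i = 0") (auto intro: cell_mono)
    have "sorted_list_of_set S ! i \<in> {0..<r*n}"
      using S nth_sorted_list_of_set_in[of S i] i finite_subset unfolding edges_def by blast
    then show "?c i \<le> ?u (Suc i)"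
      using above[of i] i unfolding cell_thresholds_def by (auto intro: cell_le cell_mono)
  qed
  then show ?thesis using S unfolding threshold_family_def by blast
qed

text \<open>The thresholds are the cells of the largest \<open>i\<close>-th vertices of the edges in \<open>C\<close>.\<close>
lemma interleaved_subset_threshold_family:
  assumes C: "C \<subseteq> edges r n" and r: "r \<ge> 1"
    and interleaved: "\<And>e f i. e \<in> C \<Longrightarrow> f \<in> C \<Longrightarrow> Suc i < r
      \<Longrightarrow> sorted_list_of_set e ! i < sorted_list_of_set f ! Suc i"
  obtains u where "u \<in> thresholds r K" "C \<subseteq> threshold_family r n K u"
proof (cases "C = {}")
  case True
  have "cell_thresholds r K (r*n) (\<lambda>_. 0) \<in> thresholds r K" using r by (rule cell_thresholds_in_thresholds) auto
  then show ?thesis using that True by blast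
next
  case False
  define a where "a i = Max ((\<lambda>e. sorted_list_of_set e ! i) ` C)" for i
  have "finite C" using C finite_edges finite_subset by blast
  then have a_ge: "sorted_list_of_set e ! i \<le> a i" if "e \<in> C" for e i
    unfolding a_def using that by (intro Max_ge) auto
  have a_less: "a i < sorted_list_of_set f ! Suc i" if "f \<in> C" "Suc i < r" for f i
  proof -
    have "a i \<in> (\<lambda>e. sorted_list_of_set e ! i) ` C" unfolding a_def using \<open>finite C\<close> False by auto
    then show ?thesis using interleaved that by auto
  qed
  obtain f where f: "f \<in> C" using False by blast
  have "a i \<le> a (Suc i)" if "Suc (Suc i) < r" for i
    using a_less[OF f, of i] a_ge[OF f, of "Suc i"] that by simp
  moreover have "a i \<le> r * n" if "Suc i < r" for i
  proof -
    have "sorted_list_of_set f ! Suc i \<in> {0..<r*n}"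
      using C f nth_sorted_list_of_set_in[of f "Suc i"] that finite_subset unfolding edges_def by blast
    then show ?thesis using a_less[OF f that] by simp
  qed
  ultimately have "cell_thresholds r K (r*n) a \<in> thresholds r K"
    using r by (intro cell_thresholds_in_thresholds)
  moreover have "C \<subseteq> threshold_family r n K (cell_thresholds r K (r*n) a)"
    using C a_less a_ge by (auto intro: mem_threshold_family_cell_thresholds)
  ultimately show ?thesis using that by blast
qed

lemma z_le_card_threshold_family:
  assumes M: "M \<in> matchings r n" and r: "r \<ge> 1"
  obtains u where "u \<in> thresholds r K" "z (rpartite_patterns r) M \<le> card (M \<inter> threshold_family r n K u)"
proof -
  obtain C where C: "C \<subseteq> M" "is_clique (rpartite_patterns r) C" "z (rpartite_patterns r) M = card C"
    using z_attained[OF M] by blast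
  obtain u where u: "u \<in> thresholds r K" "C \<subseteq> threshold_family r n K u"
    using interleaved_subset_threshold_family[OF _ r clique_nth_less[OF M C(1,2)]] C(1) matchingsD(5)[OF M]
    by blast
  have "card C \<le> card (M \<inter> threshold_family r n K u)"
    using C(1) u(2) matchingsD(6)[OF M] by (intro card_mono) auto
  then show ?thesis using that u(1) C(3) by simp
qed

lemma cell_preimage_subset:
  assumes K: "K \<ge> 1" and N: "N > 0"
  shows "{v. lo \<le> cell K N v \<and> cell K N v \<le> hi} \<subseteq> {lo * N div K..<(hi + 1) * N div K + 1}"
proof
  fix v assume v: "v \<in> {v. lo \<le> cell K N v \<and> cell K N v \<le> hi}"
  have "lo * N div K \<le> v"
  proof -
    have "lo * N \<le> (v * K div N) * N" using v unfolding cell_def by (intro mult_le_mono1) simp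
    also have "\<dots> \<le> v * K" by (metis div_mult_mod_eq le_add1)
    finally have "lo * N div K \<le> v * K div K" by (rule div_le_mono)
    then show ?thesis using K by simp
  qed
  moreover have "v < (hi + 1) * N div K + 1"
  proof -
    have "v * K < (v * K div N + 1) * N" using N
      by (metis add.commute div_mult_mod_eq mod_less_divisor mult_Suc add_less_cancel_left plus_1_eq_Suc)
    also have "\<dots> \<le> (hi + 1) * N" using v unfolding cell_def by (intro mult_le_mono1) simp
    finally have "v * K div K \<le> (hi + 1) * N div K" by (intro div_le_mono) simp
    then show ?thesis using K by simp
  qed
  ultimately show "v \<in> {lo * N div K..<(hi + 1) * N div K + 1}" by simp
qed

lemma card_cell_preimage_le:
  assumes K: "K \<ge> 1" and N: "N > 0" and "lo \<le> hi"
  shows "card {v. v < N \<and> lo \<le> cell K N v \<and> cell K N v \<le> hi}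
    \<le> (real hi - real lo + 1) * real N / real K + 2"
proof -
  define a where "a = lo * N div K"
  define b where "b = (hi + 1) * N div K + 1"
  have "{v. v < N \<and> lo \<le> cell K N v \<and> cell K N v \<le> hi} \<subseteq> {a..<b}"
    using cell_preimage_subset[OF K N, of lo hi] unfolding a_def b_def by blast
  then have "card {v. v < N \<and> lo \<le> cell K N v \<and> cell K N v \<le> hi} \<le> b - a"
    by (metis card_atLeastLessThan card_mono finite_atLeastLessThan)
  moreover have "real (b - a) \<le> (real hi - real lo + 1) * real N / real K + 2"
  proof (cases "a \<le> b")
    case True
    have "real b \<le> (real hi + 1) * real N / real K + 1"
      unfolding b_def using of_nat_div_le_of_nat[of "(hi + 1) * N" K] by (simp add: algebra_simps)
    moreover have "real lo * real N / real K - 1 \<le> real a"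
    proof -
      have "real ((lo * N) mod K) / real K \<le> 1" using K by simp
      then show ?thesis unfolding a_def using of_nat_of_nat_div_aux[where 'a = real, of "lo * N" K]
        unfolding of_nat_mult by linarith
    qed
    moreover have "(real hi + 1) * real N / real K + 1 - (real lo * real N / real K - 1)
        = (real hi - real lo + 1) * real N / real K + 2"
      using K by (simp add: field_simps)
    ultimately show ?thesis using True by simp
  next
    case False
    then show ?thesis using \<open>lo \<le> hi\<close> by simp
  qed
  ultimately show ?thesis by linarith
qed

lemma card_threshold_family_le:
  "card (threshold_family r n K u)
    \<le> (\<Prod>i<r. card {v. v < r*n \<and> u i \<le> cell K (r*n) v \<and> cell K (r*n) v \<le> u (Suc i)})"
proof -
  define J where "J i = {v. v < r*n \<and> u i \<le> cell K (r*n) v \<and> cell K (r*n) v \<le> u (Suc i)}" for i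
  define \<psi> where "\<psi> S = restrict (\<lambda>i. sorted_list_of_set S ! i) {..<r}" for S :: "nat set"
  have edge: "finite S" "card S = r" "S \<subseteq> {0..<r*n}" if "S \<in> threshold_family r n K u" for S
    using that finite_subset unfolding threshold_family_def edges_def by auto
  have "\<psi> S \<in> Pi\<^sub>E {..<r} J" if S: "S \<in> threshold_family r n K u" for S
  proof -
    have "sorted_list_of_set S ! i < r * n" if "i < r" for i
      using nth_sorted_list_of_set_in[of S i] edge[OF S] that by auto
    then show ?thesis using S unfolding \<psi>_def J_def threshold_family_def by auto
  qed
  moreover have "inj_on \<psi> (threshold_family r n K u)"
  proof (rule inj_onI)
    fix S T assume S: "S \<in> threshold_family r n K u" and T: "T \<in> threshold_family r n K u"
      and eq: "\<psi> S = \<psi> T"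
    have "sorted_list_of_set S ! i = sorted_list_of_set T ! i" if "i < r" for i
      using fun_cong[OF eq, of i] that unfolding \<psi>_def by simp
    then have "sorted_list_of_set S = sorted_list_of_set T"
      using edge[OF S] edge[OF T] by (intro nth_equalityI) auto
    then show "S = T" using edge[OF S] edge[OF T] by (metis set_sorted_list_of_set)
  qed
  moreover have "finite (Pi\<^sub>E {..<r} J)" unfolding J_def by (intro finite_PiE) auto
  ultimately have "card (threshold_family r n K u) \<le> card (Pi\<^sub>E {..<r} J)"
    by (intro card_inj_on_le) auto
  then show ?thesis by (simp add: card_PiE J_def)
qed

lemma prod_le_mean_power:
  fixes x :: "'a \<Rightarrow> real"
  assumes S: "finite S" "S \<noteq> {}" and x: "\<And>i. i \<in> S \<Longrightarrow> x i \<ge> 0"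
  shows "(\<Prod>i\<in>S. x i) \<le> ((\<Sum>i\<in>S. x i) / card S) ^ card S"
proof -
  let ?p = "\<Prod>i\<in>S. x i" and ?k = "card S"
  have k: "?k > 0" using S by (simp add: card_gt_0_iff)
  have "?p powr (1 / ?k) \<le> (\<Sum>i\<in>S. x i) / ?k"
    using arith_geom_mean[OF S x] by (simp add: sum_divide_distrib)
  moreover have "?p = (?p powr (1 / ?k)) ^ ?k"
    using k prod_nonneg[of S x] x by (cases "?p = 0") (simp_all add: powr_power)
  ultimately show ?thesis by (metis powr_ge_zero power_mono)
qed

text \<open>The range lengths \<open>u (i+1) - u i + 1\<close> sum to \<open>K + r\<close>, so AM-GM applies.\<close>
lemma prod_threshold_ranges_le:
  assumes r: "r \<ge> 1" and K: "K \<ge> 1" and u: "u \<in> thresholds r K"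
  shows "fact r * (\<Prod>i<r. (real (u (Suc i)) - real (u i) + 1) / real K)
    \<le> fact r / real r ^ r * (1 + real r / real K) ^ r"
proof -
  define w where "w i = real (u (Suc i)) - real (u i) + 1" for i
  have w: "w i \<ge> 0" if "i < r" for i using u that unfolding thresholds_def w_def by auto
  have "(\<Sum>i<r. w i) = real (u r) - real (u 0) + r"
    unfolding w_def by (simp add: sum.distrib sum_lessThan_telescope[of "\<lambda>i. real (u i)"])
  also have "\<dots> = real K + real r" using u unfolding thresholds_def by simp
  finally have "(\<Prod>i<r. w i) \<le> ((real K + real r) / real r) ^ r"
    using prod_le_mean_power[of "{..<r}" w] w r by (simp add: lessThan_empty_iff)
  then have "(\<Prod>i<r. w i / real K) \<le> ((real K + real r) / real r) ^ r / real K ^ r"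
    using K by (simp add: prod_dividef divide_right_mono)
  also have "\<dots> = (1 + real r / real K) ^ r / real r ^ r"
    using K r by (simp add: field_simps flip: power_mult_distrib power_divide)
  finally have "fact r * (\<Prod>i<r. w i / real K) \<le> fact r * ((1 + real r / real K) ^ r / real r ^ r)"
    by (rule mult_left_mono) simp
  then show ?thesis unfolding w_def by simp
qed

lemma eventually_threshold_family_density_less:
  assumes r: "r \<ge> 1" and K: "K \<ge> 1" and u: "u \<in> thresholds r K"
    and d: "fact r / real r ^ r * (1 + real r / real K) ^ r < d"
  shows "\<forall>\<^sub>F n in sequentially. card (threshold_family r n K u) / real ((r*n) choose r) < d"
proof -
  define w where "w i = real (u (Suc i)) - real (u i) + 1" for i
  have "(\<lambda>n. (\<Prod>i<r. w i * real r / real K * real n + 2) / ((r*n) choose r))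
      \<longlonglongrightarrow> fact r * (\<Prod>i<r. w i * real r / real K / real r)"
    by (rule prod_linear_over_binomial_tendsto[OF r])
  moreover have "fact r * (\<Prod>i<r. w i * real r / real K / real r) < d"
    using prod_threshold_ranges_le[OF r K u] d r unfolding w_def by simp
  ultimately have "\<forall>\<^sub>F n in sequentially. (\<Prod>i<r. w i * real r / real K * real n + 2) / ((r*n) choose r) < d"
    by (rule order_tendstoD(2))
  moreover have "\<forall>\<^sub>F n in sequentially. card (threshold_family r n K u) / real ((r*n) choose r)
      \<le> (\<Prod>i<r. w i * real r / real K * real n + 2) / ((r*n) choose r)"
    using eventually_ge_at_top[of 1]
  proof eventually_elim
    case (elim n)
    have "real (card (threshold_family r n K u))
        \<le> real (\<Prod>i<r. card {v. v < r*n \<and> u i \<le> cell K (r*n) v \<and> cell K (r*n) v \<le> u (Suc i)})"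
      using card_threshold_family_le[of r n K u] by (simp only: of_nat_le_iff)
    also have "\<dots> = (\<Prod>i<r. real (card {v. v < r*n \<and> u i \<le> cell K (r*n) v \<and> cell K (r*n) v \<le> u (Suc i)}))"
      by simp
    also have "\<dots> \<le> (\<Prod>i<r. w i * real r / real K * real n + 2)"
    proof (rule prod_mono)
      fix i assume "i \<in> {..<r}"
      then have "u i \<le> u (Suc i)" using u unfolding thresholds_def by auto
      then show "0 \<le> real (card {v. v < r*n \<and> u i \<le> cell K (r*n) v \<and> cell K (r*n) v \<le> u (Suc i)})
          \<and> real (card {v. v < r*n \<and> u i \<le> cell K (r*n) v \<and> cell K (r*n) v \<le> u (Suc i)})
            \<le> w i * real r / real K * real n + 2"
        using card_cell_preimage_le[OF K, of "r*n"] elim r unfolding w_def by (simp add: mult_ac)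
    qed
    finally show ?case by (simp add: divide_right_mono)
  qed
  ultimately show ?thesis by eventually_elim simp
qed

section \<open>Concentration of the largest \<open>r\<close>-partite clique\<close>

lemma edge_count_concentration:
  fixes \<epsilon> :: real
  assumes r: "r \<ge> 1" and \<epsilon>: "\<epsilon> > 0" and F: "\<And>n. F n \<subseteq> edges r n"
  shows "(\<lambda>n. measure_pmf.prob (pmf_of_set (matchings r n))
      {M. \<epsilon> * n \<le> \<bar>real (card (M \<inter> F n)) - real (card (F n)) * n / ((r*n) choose r)\<bar>}) \<longlonglongrightarrow> 0"
proof (rule tendsto_sandwich[of "\<lambda>_. 0" _ _ "\<lambda>n. var_bound r n / (\<epsilon> * n)\<^sup>2"])
  show "\<forall>\<^sub>F n in sequentially. measure_pmf.prob (pmf_of_set (matchings r n))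
      {M. \<epsilon> * n \<le> \<bar>real (card (M \<inter> F n)) - real (card (F n)) * n / ((r*n) choose r)\<bar>}
      \<le> var_bound r n / (\<epsilon> * n)\<^sup>2"
    using eventually_ge_at_top[of 2]
  proof eventually_elim
    case (elim n)
    then have "\<epsilon> * n > 0" using \<epsilon> by simp
    then show ?case by (rule prob_edge_count_deviation_le[OF r elim F])
  qed
  have "(\<lambda>n. 1 / \<epsilon>\<^sup>2 * (var_bound r n / real n ^ 2)) \<longlonglongrightarrow> 1 / \<epsilon>\<^sup>2 * 0"
    by (intro tendsto_intros var_bound_tendsto_0[OF r])
  then show "(\<lambda>n. var_bound r n / (\<epsilon> * n)\<^sup>2) \<longlonglongrightarrow> 0"
    by (simp add: power_mult_distrib)
qed simp_all

lemma prob_matchings_mono: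
  assumes r: "r \<ge> 1" and AB: "\<And>M. M \<in> matchings r n \<Longrightarrow> M \<in> A \<Longrightarrow> M \<in> B"
  shows "measure_pmf.prob (pmf_of_set (matchings r n)) A \<le> measure_pmf.prob (pmf_of_set (matchings r n)) B"
proof -
  let ?p = "pmf_of_set (matchings r n)"
  have "set_pmf ?p = matchings r n" using matchings_nonempty[OF r] finite_matchings by simp
  then have "A \<inter> set_pmf ?p \<subseteq> B" using AB by blast
  then have "measure_pmf.prob ?p (A \<inter> set_pmf ?p) \<le> measure_pmf.prob ?p B"
    by (intro measure_pmf.finite_measure_mono) auto
  then show ?thesis by (simp add: measure_Int_set_pmf)
qed

lemma prob_z_below_le_transversal_deviation:
  assumes r: "r \<ge> 1" and n: "n > 0" and density: "c - \<epsilon> / 2 < real n ^ r / ((r*n) choose r)"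
  shows "measure_pmf.prob (pmf_of_set (matchings r n)) {M. real (z (rpartite_patterns r) M) / n < c - \<epsilon>}
    \<le> measure_pmf.prob (pmf_of_set (matchings r n)) {M. \<epsilon> / 2 * n \<le>
      \<bar>real (card (M \<inter> transversals r n)) - real (card (transversals r n)) * n / ((r*n) choose r)\<bar>}"
proof (rule prob_matchings_mono[OF r])
  fix M assume M: "M \<in> matchings r n" and "M \<in> {M. real (z (rpartite_patterns r) M) / n < c - \<epsilon>}"
  then have "real (card (M \<inter> transversals r n)) < (c - \<epsilon>) * n"
    using card_transversals_le_z[OF M r] n by (simp add: divide_less_eq)
  moreover have "real n ^ r \<le> card (transversals r n)"
    using power_le_card_transversals[of n r] by (metis of_nat_le_iff of_nat_power)
  then have "c - \<epsilon> / 2 < real (card (transversals r n)) / ((r*n) choose r)"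
    using density by (meson divide_right_mono less_le_trans of_nat_0_le_iff)
  then have "(c - \<epsilon> / 2) * n < real (card (transversals r n)) * n / ((r*n) choose r)"
    using n mult_strict_right_mono[of _ _ "real n"] by fastforce
  ultimately have "\<epsilon> / 2 * n \<le> - (real (card (M \<inter> transversals r n))
      - real (card (transversals r n)) * n / ((r*n) choose r))"
    by (simp add: algebra_simps)
  then show "M \<in> {M. \<epsilon> / 2 * n \<le>
      \<bar>real (card (M \<inter> transversals r n)) - real (card (transversals r n)) * n / ((r*n) choose r)\<bar>}"
    unfolding mem_Collect_eq by (meson abs_ge_minus_self order_trans)
qed

lemma prob_z_below_tendsto_0:
  assumes r: "r \<ge> 1" and \<epsilon>: "\<epsilon> > 0"
  shows "(\<lambda>n. measure_pmf.prob (pmf_of_set (matchings r n))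
      {M. real (z (rpartite_patterns r) M) / n < fact r / real r ^ r - \<epsilon>}) \<longlonglongrightarrow> 0"
proof -
  define c where "c = fact r / real r ^ r"
  have "(\<lambda>n. (\<Prod>i<r. 1 * real n + 0) / ((r*n) choose r)) \<longlonglongrightarrow> fact r * (\<Prod>i<r. 1 / real r)"
    by (rule prod_linear_over_binomial_tendsto[OF r])
  then have "(\<lambda>n. real n ^ r / ((r*n) choose r)) \<longlonglongrightarrow> c"
    unfolding c_def by (simp add: power_one_over)
  then have "\<forall>\<^sub>F n in sequentially. c - \<epsilon> / 2 < real n ^ r / ((r*n) choose r)"
    using \<epsilon> by (intro order_tendstoD(1)) auto
  then have le: "\<forall>\<^sub>F n in sequentially.
      measure_pmf.prob (pmf_of_set (matchings r n)) {M. real (z (rpartite_patterns r) M) / n < c - \<epsilon>}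
    \<le> measure_pmf.prob (pmf_of_set (matchings r n)) {M. \<epsilon> / 2 * n \<le>
      \<bar>real (card (M \<inter> transversals r n)) - real (card (transversals r n)) * n / ((r*n) choose r)\<bar>}"
    using eventually_gt_at_top[of 0]
    by eventually_elim (rule prob_z_below_le_transversal_deviation[OF r])
  have lim: "(\<lambda>n. measure_pmf.prob (pmf_of_set (matchings r n)) {M. \<epsilon> / 2 * n \<le>
      \<bar>real (card (M \<inter> transversals r n)) - real (card (transversals r n)) * n / ((r*n) choose r)\<bar>})
    \<longlonglongrightarrow> 0"
    by (rule edge_count_concentration[OF r, where \<epsilon> = "\<epsilon> / 2" and F = "transversals r"])
      (use \<epsilon> in \<open>auto simp: transversals_def\<close>)
  show ?thesis unfolding c_def[symmetric] by (rule tendsto_sandwich[OF _ le tendsto_const lim]) simp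
qed

lemma prob_z_above_le_sum_deviations:
  assumes r: "r \<ge> 1" and n: "n > 0"
    and density: "\<forall>u\<in>thresholds r K. card (threshold_family r n K u) / real ((r*n) choose r) < c + \<epsilon> / 2"
  shows "measure_pmf.prob (pmf_of_set (matchings r n)) {M. c + \<epsilon> < real (z (rpartite_patterns r) M) / n}
    \<le> (\<Sum>u\<in>thresholds r K. measure_pmf.prob (pmf_of_set (matchings r n)) {M. \<epsilon> / 2 * n \<le>
      \<bar>real (card (M \<inter> threshold_family r n K u))
        - real (card (threshold_family r n K u)) * n / ((r*n) choose r)\<bar>})"
    (is "_ \<le> (\<Sum>u\<in>_. measure_pmf.prob _ (?dev u))")
proof -
  have "measure_pmf.prob (pmf_of_set (matchings r n)) {M. c + \<epsilon> < real (z (rpartite_patterns r) M) / n}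
      \<le> measure_pmf.prob (pmf_of_set (matchings r n)) (\<Union>u\<in>thresholds r K. ?dev u)"
  proof (rule prob_matchings_mono[OF r])
    fix M assume M: "M \<in> matchings r n" and "M \<in> {M. c + \<epsilon> < real (z (rpartite_patterns r) M) / n}"
    then have large: "(c + \<epsilon>) * n < real (z (rpartite_patterns r) M)"
      using n by (simp add: less_divide_eq)
    obtain u where u: "u \<in> thresholds r K" "z (rpartite_patterns r) M \<le> card (M \<inter> threshold_family r n K u)"
      using z_le_card_threshold_family[OF M r] by blast
    have "real (card (threshold_family r n K u)) / ((r*n) choose r) < c + \<epsilon> / 2" using density u(1) by blast
    then have "real (card (threshold_family r n K u)) / ((r*n) choose r) * n < (c + \<epsilon> / 2) * n"
      by (rule mult_strict_right_mono) (use n in simp)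
    then have "\<epsilon> / 2 * n \<le> real (card (M \<inter> threshold_family r n K u))
        - real (card (threshold_family r n K u)) * n / ((r*n) choose r)"
      using large u(2) by (simp add: algebra_simps)
    then have "M \<in> ?dev u" unfolding mem_Collect_eq by (meson abs_ge_self order_trans)
    then show "M \<in> (\<Union>u\<in>thresholds r K. ?dev u)" using u(1) by blast
  qed
  also have "\<dots> \<le> (\<Sum>u\<in>thresholds r K. measure_pmf.prob (pmf_of_set (matchings r n)) (?dev u))"
    by (intro measure_pmf.finite_measure_subadditive_finite finite_thresholds) auto
  finally show ?thesis .
qed

lemma prob_z_above_tendsto_0:
  assumes r: "r \<ge> 1" and \<epsilon>: "\<epsilon> > 0"
  shows "(\<lambda>n. measure_pmf.prob (pmf_of_set (matchings r n))
      {M. fact r / real r ^ r + \<epsilon> < real (z (rpartite_patterns r) M) / n}) \<longlonglongrightarrow> 0"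
proof -
  define c where "c = fact r / real r ^ r"
  have "(\<lambda>K. c * (1 + real r / real K) ^ r) \<longlonglongrightarrow> c * (1 + 0) ^ r"
    by (intro tendsto_intros)
  then have "\<forall>\<^sub>F K in sequentially. c * (1 + real r / real K) ^ r < c + \<epsilon> / 2"
    using \<epsilon> by (intro order_tendstoD(2)) auto
  then obtain K0 where K0: "\<And>K. K \<ge> K0 \<Longrightarrow> c * (1 + real r / real K) ^ r < c + \<epsilon> / 2"
    unfolding eventually_sequentially by blast
  define K where "K = max K0 1"
  have K: "K \<ge> 1" "c * (1 + real r / real K) ^ r < c + \<epsilon> / 2" using K0[of K] unfolding K_def by auto
  have "\<forall>\<^sub>F n in sequentially.
      \<forall>u\<in>thresholds r K. card (threshold_family r n K u) / real ((r*n) choose r) < c + \<epsilon> / 2"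
    using eventually_threshold_family_density_less[OF r K(1) _ K(2)[unfolded c_def]]
    by (intro eventually_ball_finite finite_thresholds) (auto simp: c_def)
  then have le: "\<forall>\<^sub>F n in sequentially.
      measure_pmf.prob (pmf_of_set (matchings r n)) {M. c + \<epsilon> < real (z (rpartite_patterns r) M) / n}
    \<le> (\<Sum>u\<in>thresholds r K. measure_pmf.prob (pmf_of_set (matchings r n)) {M. \<epsilon> / 2 * n \<le>
      \<bar>real (card (M \<inter> threshold_family r n K u))
        - real (card (threshold_family r n K u)) * n / ((r*n) choose r)\<bar>})"
    using eventually_gt_at_top[of 0]
    by eventually_elim (rule prob_z_above_le_sum_deviations[OF r])
  have lim: "(\<lambda>n. \<Sum>u\<in>thresholds r K. measure_pmf.prob (pmf_of_set (matchings r n)) {M. \<epsilon> / 2 * n \<le>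
      \<bar>real (card (M \<inter> threshold_family r n K u))
        - real (card (threshold_family r n K u)) * n / ((r*n) choose r)\<bar>}) \<longlonglongrightarrow> 0"
  proof (rule tendsto_null_sum)
    fix u
    show "(\<lambda>n. measure_pmf.prob (pmf_of_set (matchings r n)) {M. \<epsilon> / 2 * n \<le>
        \<bar>real (card (M \<inter> threshold_family r n K u))
          - real (card (threshold_family r n K u)) * n / ((r*n) choose r)\<bar>}) \<longlonglongrightarrow> 0"
      by (rule edge_count_concentration[OF r, where \<epsilon> = "\<epsilon> / 2" and F = "\<lambda>n. threshold_family r n K u"])
        (use \<epsilon> threshold_family_subset_edges in auto)
  qed
  show ?thesis unfolding c_def[symmetric] by (rule tendsto_sandwich[OF _ le tendsto_const lim]) simp
qed

theorem theorem2p1: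
  fixes r :: nat
  assumes "r \<ge> 2"
  shows "\<forall>\<epsilon>>0. (\<lambda>n. measure_pmf.prob (pmf_of_set (matchings r n))
            {M. \<bar>real (z (rpartite_patterns r) M) / real n - fact (r - 1) / real r ^ (r - 1)\<bar> > \<epsilon>})
          \<longlonglongrightarrow> 0"
proof (intro allI impI)
  fix \<epsilon> :: real assume \<epsilon>: "\<epsilon> > 0"
  have r: "r \<ge> 1" using assms by simp
  define c where "c = fact r / real r ^ r"
  have c_eq: "fact (r - 1) / real r ^ (r - 1) = c" using r unfolding c_def by (cases r) auto
  let ?prob = "\<lambda>n. measure_pmf.prob (pmf_of_set (matchings r n))"
  let ?below = "\<lambda>n. ?prob n {M. real (z (rpartite_patterns r) M) / n < c - \<epsilon>}"
  let ?above = "\<lambda>n. ?prob n {M. c + \<epsilon> < real (z (rpartite_patterns r) M) / n}"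
  have le: "?prob n {M. \<bar>real (z (rpartite_patterns r) M) / n - c\<bar> > \<epsilon>} \<le> ?below n + ?above n" for n
    by (rule order_trans[OF measure_pmf.finite_measure_mono measure_Un_le]) auto
  have lim: "(\<lambda>n. ?below n + ?above n) \<longlonglongrightarrow> 0"
    using tendsto_add[OF prob_z_below_tendsto_0[OF r \<epsilon>] prob_z_above_tendsto_0[OF r \<epsilon>]]
    unfolding c_def by simp
  show "(\<lambda>n. measure_pmf.prob (pmf_of_set (matchings r n))
      {M. \<bar>real (z (rpartite_patterns r) M) / real n - fact (r - 1) / real r ^ (r - 1)\<bar> > \<epsilon>}) \<longlonglongrightarrow> 0"
    unfolding c_eq by (rule tendsto_sandwich[OF _ _ tendsto_const lim]) (simp_all add: le)
qed

end
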